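(* Let $A$ be a unital commutative Banach algebra, $X$ a compact Hausdorff space, and $f:X\to A$ a continuous function. Then there is an assignment $P\mapsto Pf$ from $\mathscr{P}(C(X))$ to $A$ such that: (i) $\phi(Pf)=P(\phi\circ f)$ for every $P\in\mathscr{P}(C(X))$ and every $\phi\in\mathfrak{M}(A)$; (ii) the set $\{Pf:P\in\mathscr{P}(C(X))\}$ is a subalgebra of $A$ and is dense in the closed subalgebra of $A$ generated by $f(X)$.
   Context: $C(X)$ is the Banach space of continuous complex functions on $X$ with the uniform norm. $\mathscr{P}(C(X))$ denotes the algebra of polynomials of finite type on $C(X)$: finite sums of functions $g\mapsto c\,\psi_1(g)\cdots\psi_n(g)$ with $n\ge0$, $c\in\mathbb{C}$, $\psi_i\in C(X)^*$. $\mathfrak{M}(A)$ is the character space of $A$ (nonzero multiplicative linear functionals); for $\phi\in\mathfrak{M}(A)$, $\phi\circ f\in C(X)$. The subalgebra generated by $f(X)$ means the smallest closed subalgebra of $A$ containing $f(X)$ and the unit. *)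

theory Defs
  imports "HOL-Analysis.Analysis"
begin

class cbanach_algebra = real_normed_algebra_1 + comm_ring_1 + banach +
  fixes scaleC :: "complex \<Rightarrow> 'a \<Rightarrow> 'a"
  assumes scaleC_add_right: "scaleC a (x + y) = scaleC a x + scaleC a y"
    and scaleC_add_left: "scaleC (a + b) x = scaleC a x + scaleC b x"
    and scaleC_scaleC: "scaleC a (scaleC b x) = scaleC (a * b) x"
    and scaleC_one: "scaleC 1 x = x"
    and scaleR_scaleC: "scaleR r x = scaleC (complex_of_real r) x"
    and norm_scaleC: "norm (scaleC a x) = cmod a * norm x"
    and mult_scaleC_left: "scaleC a x * y = scaleC a (x * y)"

definition character :: "('a::cbanach_algebra \<Rightarrow> complex) \<Rightarrow> bool" where
  "character \<phi> \<longleftrightarrow>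
     (\<forall>x y. \<phi> (x + y) = \<phi> x + \<phi> y) \<and>
     (\<forall>c x. \<phi> (scaleC c x) = c * \<phi> x) \<and>
     (\<forall>x y. \<phi> (x * y) = \<phi> x * \<phi> y) \<and>
     (\<exists>x. \<phi> x \<noteq> 0)"

text \<open>C(X): continuous complex functions on X (only values on X matter).\<close>
definition CX :: "'x::topological_space set \<Rightarrow> ('x \<Rightarrow> complex) set" where
  "CX X = {g. continuous_on X g}"

definition CX_dual :: "'x::topological_space set \<Rightarrow> (('x \<Rightarrow> complex) \<Rightarrow> complex) set" where
  "CX_dual X = {\<psi>.
     (\<forall>g\<in>CX X. \<forall>h\<in>CX X. \<psi> (\<lambda>x. g x + h x) = \<psi> g + \<psi> h) \<and>
     (\<forall>c. \<forall>g\<in>CX X. \<psi> (\<lambda>x. c * g x) = c * \<psi> g) \<and>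
     (\<exists>K. \<forall>g\<in>CX X. cmod (\<psi> g) \<le> K * (SUP x\<in>X. cmod (g x)))}"

definition poly_finite_type :: "'x::topological_space set \<Rightarrow> (('x \<Rightarrow> complex) \<Rightarrow> complex) set" where
  "poly_finite_type X = {P.
     (\<exists>(N::nat) (c::nat \<Rightarrow> complex) (m::nat \<Rightarrow> nat) (\<psi>::nat \<Rightarrow> nat \<Rightarrow> ('x \<Rightarrow> complex) \<Rightarrow> complex).
        (\<forall>k<N. \<forall>i<m k. \<psi> k i \<in> CX_dual X) \<and>
        (\<forall>g\<in>CX X. P g = (\<Sum>k<N. c k * (\<Prod>i<m k. \<psi> k i g)))) \<and>
     (\<forall>g. g \<notin> CX X \<longrightarrow> P g = 0)}"

definition csubalgebra :: "'a::cbanach_algebra set \<Rightarrow> bool" where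
  "csubalgebra S \<longleftrightarrow> 1 \<in> S \<and>
     (\<forall>x\<in>S. \<forall>y\<in>S. x + y \<in> S \<and> x * y \<in> S) \<and>
     (\<forall>c. \<forall>x\<in>S. scaleC c x \<in> S)"

definition closed_subalg_gen :: "'a::cbanach_algebra set \<Rightarrow> 'a set" where
  "closed_subalg_gen F = \<Inter>{B. csubalgebra B \<and> closed B \<and> F \<subseteq> B}"

end

theory Submission
  imports Defs "HOL-Computational_Algebra.Polynomial"
begin

text \<open>For \<open>\<psi> \<in> C(X)\<^sup>*\<close> let \<open>\<integral> f d\<psi> \<in> A\<close> be the limit of the Riemann sums \<open>\<Sum>\<^sub>j \<psi>(g\<^sub>j) y\<^sub>j\<close>, where
  \<open>(g\<^sub>j)\<close> is a partition of unity on \<open>X\<close> and \<open>f\<close> is \<open>\<delta>\<close>-close to the tag \<open>y\<^sub>j \<in> f(X)\<close> on the support of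
  \<open>g\<^sub>j\<close>; the sums are Cauchy as \<open>\<delta> \<rightarrow> 0\<close> because \<open>\<psi>\<close> has bounded variation. Writing
  \<open>P = \<Sum> c \<psi>\<^sub>1 \<cdots> \<psi>\<^sub>n\<close>, put \<open>Pf = \<Sum> c (\<integral> f d\<psi>\<^sub>1) \<cdots> (\<integral> f d\<psi>\<^sub>n)\<close>. This does not depend on the
  representation of \<open>P\<close>: on a fixed partition, substituting the Riemann sums for the \<open>\<psi>\<^sub>i\<close> turns two
  representations into formal polynomials in the tags which agree on \<open>\<complex>\<^sup>M\<close>, hence coincide.
  Characters are continuous and linear, so \<open>\<phi>(\<integral> f d\<psi>) = \<psi>(\<phi> \<circ> f)\<close> and (i) follows. The \<open>Pf\<close>
  form a subalgebra since representations can be added and multiplied; they lie in every closed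
  subalgebra containing \<open>f(X)\<close>, and they contain \<open>f(X)\<close> because \<open>\<integral> f d\<delta>\<^sub>x = f x\<close>.\<close>

section \<open>Polynomial identities\<close>

datatype pexpr = PConst complex | PVar nat | PAdd pexpr pexpr | PMul pexpr pexpr

primrec peval :: "(complex \<Rightarrow> 'b::comm_ring_1) \<Rightarrow> (nat \<Rightarrow> 'b) \<Rightarrow> pexpr \<Rightarrow> 'b" where
  "peval h t (PConst c) = h c"
| "peval h t (PVar j) = t j"
| "peval h t (PAdd a b) = peval h t a + peval h t b"
| "peval h t (PMul a b) = peval h t a * peval h t b"

primrec pvars_less :: "nat \<Rightarrow> pexpr \<Rightarrow> bool" where
  "pvars_less n (PConst c) = True"
| "pvars_less n (PVar j) = (j < n)"
| "pvars_less n (PAdd a b) = (pvars_less n a \<and> pvars_less n b)"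
| "pvars_less n (PMul a b) = (pvars_less n a \<and> pvars_less n b)"

lemma peval_cong:
  "pvars_less n e \<Longrightarrow> (\<And>j. j < n \<Longrightarrow> t j = t' j) \<Longrightarrow> peval h t e = peval h t' e"
  by (induction e) auto

text \<open>Coefficient lists of an expression viewed as a polynomial in the variable \<open>n\<close>, with
  coefficients that are again expressions: this reduces the identity theorem for polynomials
  in several variables to the one-variable case.\<close>

fun padd_coeffs :: "pexpr list \<Rightarrow> pexpr list \<Rightarrow> pexpr list" where
  "padd_coeffs [] ys = ys"
| "padd_coeffs xs [] = xs"
| "padd_coeffs (x # xs) (y # ys) = PAdd x y # padd_coeffs xs ys"

primrec pmul_coeffs :: "pexpr list \<Rightarrow> pexpr list \<Rightarrow> pexpr list" where
  "pmul_coeffs [] ys = []"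
| "pmul_coeffs (x # xs) ys = padd_coeffs (map (PMul x) ys) (PConst 0 # pmul_coeffs xs ys)"

primrec pcoeffs :: "nat \<Rightarrow> pexpr \<Rightarrow> pexpr list" where
  "pcoeffs n (PConst c) = [PConst c]"
| "pcoeffs n (PVar j) = (if j = n then [PConst 0, PConst 1] else [PVar j])"
| "pcoeffs n (PAdd a b) = padd_coeffs (pcoeffs n a) (pcoeffs n b)"
| "pcoeffs n (PMul a b) = pmul_coeffs (pcoeffs n a) (pcoeffs n b)"

lemma Poly_padd_coeffs:
  "Poly (map (peval h t) (padd_coeffs xs ys)) = Poly (map (peval h t) xs) + Poly (map (peval h t) ys)"
  by (induction xs ys rule: padd_coeffs.induct) auto

lemma Poly_pmul_coeffs:
  assumes "h 0 = 0"
  shows "Poly (map (peval h t) (pmul_coeffs xs ys)) = Poly (map (peval h t) xs) * Poly (map (peval h t) ys)"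
proof (induction xs)
  case (Cons x xs)
  have "Poly (map (peval h t \<circ> PMul x) ys) = smult (peval h t x) (Poly (map (peval h t) ys))"
    by (induction ys) auto
  with Cons assms show ?case by (simp add: Poly_padd_coeffs)
qed simp

lemma peval_eq_poly_pcoeffs:
  "h 0 = 0 \<Longrightarrow> h 1 = 1 \<Longrightarrow> peval h t e = poly (Poly (map (peval h t) (pcoeffs n e))) (t n)"
  by (induction e) (auto simp: Poly_padd_coeffs Poly_pmul_coeffs)

lemma pvars_less_padd_coeffs:
  "\<forall>x\<in>set xs. pvars_less n x \<Longrightarrow> \<forall>x\<in>set ys. pvars_less n x \<Longrightarrow> \<forall>x\<in>set (padd_coeffs xs ys). pvars_less n x"
  by (induction xs ys rule: padd_coeffs.induct) auto

lemma pvars_less_pmul_coeffs: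
  "\<forall>x\<in>set xs. pvars_less n x \<Longrightarrow> \<forall>x\<in>set ys. pvars_less n x \<Longrightarrow> \<forall>x\<in>set (pmul_coeffs xs ys). pvars_less n x"
proof (induction xs)
  case (Cons x xs)
  then show ?case by (simp del: padd_coeffs.simps) (rule pvars_less_padd_coeffs, auto)
qed simp

lemma pvars_less_pcoeffs: "pvars_less (Suc n) e \<Longrightarrow> \<forall>x\<in>set (pcoeffs n e). pvars_less n x"
proof (induction e)
  case (PAdd e1 e2)
  then show ?case by (simp del: padd_coeffs.simps) (rule pvars_less_padd_coeffs, auto)
next
  case (PMul e1 e2)
  then show ?case
    by (simp del: padd_coeffs.simps pmul_coeffs.simps) (rule pvars_less_pmul_coeffs, auto)
qed auto

lemma peval_hom_no_vars:
  assumes "\<And>a b. h (a + b) = h a + h b" "\<And>a b. h (a * b) = h a * h b"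
  shows "pvars_less 0 e \<Longrightarrow> peval h s e = h (peval id t e)"
  by (induction e) (auto simp: assms)

text \<open>By the one-variable identity theorem all coefficients of \<open>e\<close> with respect to the last variable
  vanish on \<open>\<complex>\<^sup>n\<^sup>-\<^sup>1\<close>; induction on the number of variables.\<close>
lemma peval_hom_eq_0:
  fixes h :: "complex \<Rightarrow> 'b::comm_ring_1"
  assumes hadd: "\<And>a b. h (a + b) = h a + h b" and hmul: "\<And>a b. h (a * b) = h a * h b"
    and h0: "h 0 = 0" and h1: "h 1 = 1"
  shows "pvars_less n e \<Longrightarrow> (\<forall>t. peval id t e = 0) \<Longrightarrow> peval h s e = 0"
proof (induction n arbitrary: e s)
  case 0
  have "peval id (\<lambda>_. 0) e = 0" using 0(2) by blast
  then show ?case using peval_hom_no_vars[OF hadd hmul 0(1), of s "\<lambda>_. 0"] h0 by simp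
next
  case (Suc n)
  let ?cs = "pcoeffs n e"
  have vars: "\<forall>x\<in>set ?cs. pvars_less n x" using pvars_less_pcoeffs Suc.prems(1) by blast
  have coeffs_vanish: "\<forall>t. peval id t x = 0" if x: "x \<in> set ?cs" for x
  proof
    fix t
    have "poly (Poly (map (peval id t) ?cs)) z = 0" for z
    proof -
      have "map (peval id t) ?cs = map (peval id (t(n := z))) ?cs"
        using vars by (auto intro!: peval_cong)
      moreover have "peval id (t(n := z)) e = poly (Poly (map (peval id (t(n := z))) ?cs)) z"
        using peval_eq_poly_pcoeffs[of "id :: complex \<Rightarrow> complex" "t(n := z)" e n] by simp
      ultimately show ?thesis using Suc.prems(2) by metis
    qed
    then have "Poly (map (peval id t) ?cs) = 0" using poly_all_0_iff_0 by blast
    then obtain k where "map (peval id t) ?cs = replicate k 0" using Poly_eq_0 by blast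
    then show "peval id t x = 0" using x by (metis image_eqI in_set_replicate list.set_map)
  qed
  have "peval h s x = 0" if "x \<in> set ?cs" for x
    using Suc.IH vars coeffs_vanish that by blast
  then have "map (peval h s) ?cs = replicate (length ?cs) 0"
    by (simp add: map_replicate_const[symmetric] cong: map_cong)
  then show ?case using peval_eq_poly_pcoeffs[OF h0 h1, of s e n] by (simp add: Poly_eq_0)
qed

definition psum :: "pexpr list \<Rightarrow> pexpr" where "psum es = foldr PAdd es (PConst 0)"

definition pprod :: "pexpr list \<Rightarrow> pexpr" where "pprod es = foldr PMul es (PConst 1)"

lemma peval_psum: "h 0 = 0 \<Longrightarrow> peval h s (psum es) = (\<Sum>e\<leftarrow>es. peval h s e)"
  unfolding psum_def by (induction es) auto

lemma peval_pprod: "h 1 = 1 \<Longrightarrow> peval h s (pprod es) = (\<Prod>e\<leftarrow>es. peval h s e)"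
  unfolding pprod_def by (induction es) auto

lemma pvars_less_psum: "(\<And>e. e \<in> set es \<Longrightarrow> pvars_less n e) \<Longrightarrow> pvars_less n (psum es)"
  unfolding psum_def by (induction es) auto

lemma pvars_less_pprod: "(\<And>e. e \<in> set es \<Longrightarrow> pvars_less n e) \<Longrightarrow> pvars_less n (pprod es)"
  unfolding pprod_def by (induction es) auto

section \<open>Complex scalars and characters\<close>

lemma geometric_series_inverse:
  fixes b :: "'a::{real_normed_algebra_1,banach}"
  assumes "norm b < 1"
  shows "(1 - b) * (\<Sum>n. b ^ n) = 1"
proof -
  have sm: "summable (\<lambda>n. b ^ n)" using complete_algebra_summable_geometric[OF assms] .
  have "b * (\<Sum>n. b ^ n) = (\<Sum>n. b ^ Suc n)" using suminf_mult[OF sm, of b] by simp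
  also have "\<dots> = (\<Sum>n. b ^ n) - 1" using suminf_split_head[OF sm] by simp
  finally show ?thesis by (simp add: left_diff_distrib)
qed

definition of_complex :: "complex \<Rightarrow> 'a::cbanach_algebra" where
  "of_complex c = scaleC c 1"

lemma scaleC_zero_left: "scaleC 0 (x::'a::cbanach_algebra) = 0"
  using scaleC_add_left[of 0 0 x] by simp

lemma scaleC_eq_of_complex_mult: "scaleC c (x::'a::cbanach_algebra) = of_complex c * x"
  unfolding of_complex_def using mult_scaleC_left[of c 1 x] by simp

lemma of_complex_add: "of_complex (a + b) = (of_complex a + of_complex b :: 'a::cbanach_algebra)"
  unfolding of_complex_def by (simp add: scaleC_add_left)

lemma of_complex_mult: "of_complex (a * b) = (of_complex a * of_complex b :: 'a::cbanach_algebra)"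
  unfolding of_complex_def by (simp add: mult_scaleC_left scaleC_scaleC)

lemma of_complex_0 [simp]: "of_complex 0 = (0::'a::cbanach_algebra)"
  unfolding of_complex_def by (simp add: scaleC_zero_left)

lemma of_complex_1 [simp]: "of_complex 1 = (1::'a::cbanach_algebra)"
  unfolding of_complex_def by (simp add: scaleC_one)

lemma of_complex_minus: "of_complex (- a) = (- of_complex a :: 'a::cbanach_algebra)"
  using of_complex_add[of a "- a", where 'a='a] by (simp add: eq_neg_iff_add_eq_0 add.commute)

lemma of_complex_sum: "of_complex (\<Sum>i\<in>I. g i) = (\<Sum>i\<in>I. of_complex (g i) :: 'a::cbanach_algebra)"
  by (induction I rule: infinite_finite_induct) (auto simp: of_complex_add)

lemma norm_of_complex_mult: "norm (of_complex c * (x::'a::cbanach_algebra)) = cmod c * norm x"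
  by (metis norm_scaleC scaleC_eq_of_complex_mult)

lemma of_complex_of_real_mult: "of_complex (complex_of_real r) * x = r *\<^sub>R (x::'a::cbanach_algebra)"
  by (simp add: scaleR_scaleC scaleC_eq_of_complex_mult)

context
  fixes \<phi> :: "'a::cbanach_algebra \<Rightarrow> complex"
  assumes \<phi>: "character \<phi>"
begin

lemma character_add: "\<phi> (x + y) = \<phi> x + \<phi> y"
  using \<phi> unfolding character_def by blast

lemma character_mult: "\<phi> (x * y) = \<phi> x * \<phi> y"
  using \<phi> unfolding character_def by blast

lemma character_of_complex_mult: "\<phi> (of_complex c * x) = c * \<phi> x"
  using \<phi> unfolding character_def by (metis scaleC_eq_of_complex_mult)

lemma character_0: "\<phi> 0 = 0"
  using character_add[of 0 0] by simp

lemma character_1: "\<phi> 1 = 1"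
proof -
  obtain x where "\<phi> x \<noteq> 0" using \<phi> unfolding character_def by blast
  then show ?thesis using character_mult[of 1 x] by simp
qed

lemma character_diff: "\<phi> (x - y) = \<phi> x - \<phi> y"
  using character_add[of "x - y" y] by simp

lemma character_of_complex: "\<phi> (of_complex c) = c"
  using character_of_complex_mult[of c 1] character_1 by simp

lemmas character_simps =
  character_add character_mult character_of_complex_mult character_0 character_1
  character_diff character_of_complex

lemma character_sum: "\<phi> (\<Sum>i\<in>I. g i) = (\<Sum>i\<in>I. \<phi> (g i))"
  by (induction I rule: infinite_finite_induct) (auto simp: character_simps)

lemma character_sum_list: "\<phi> (\<Sum>x\<leftarrow>xs. g x) = (\<Sum>x\<leftarrow>xs. \<phi> (g x))"
  by (induction xs) (auto simp: character_simps)

lemma character_prod_list: "\<phi> (\<Prod>x\<leftarrow>xs. g x) = (\<Prod>x\<leftarrow>xs. \<phi> (g x))"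
  by (induction xs) (auto simp: character_simps)

text \<open>If \<open>\<bar>\<phi> a\<bar> > \<parallel>a\<parallel>\<close>, then \<open>b = a / \<phi> a\<close> has norm below 1, so \<open>1 - b\<close> is invertible by the
  Neumann series, although \<open>\<phi> (1 - b) = 0\<close>.\<close>
lemma norm_character_le: "cmod (\<phi> a) \<le> norm a"
proof (rule ccontr)
  assume "\<not> ?thesis"
  then have lt: "norm a < cmod (\<phi> a)" by simp
  then have nz: "\<phi> a \<noteq> 0" using norm_ge_zero[of a] by auto
  define b where "b = of_complex (1 / \<phi> a) * a"
  have "norm b < 1" unfolding b_def norm_of_complex_mult using lt nz
    by (simp add: norm_divide divide_less_eq mult.commute)
  then have "\<phi> ((1 - b) * (\<Sum>n. b ^ n)) = 1" by (simp add: geometric_series_inverse character_1)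
  moreover have "\<phi> b = 1" unfolding b_def using nz by (simp add: character_simps)
  ultimately show False by (simp add: character_simps)
qed

lemma continuous_on_character: "continuous_on S \<phi>"
  unfolding continuous_on_iff
proof (intro ballI allI impI)
  fix x e assume "(0::real) < e"
  then show "\<exists>d>0. \<forall>x'\<in>S. dist x' x < d \<longrightarrow> dist (\<phi> x') (\<phi> x) < e"
    by (intro exI[of _ e]) (auto simp: dist_norm character_diff[symmetric]
        intro: le_less_trans[OF norm_character_le])
qed

end

section \<open>The dual of \<open>C(X)\<close>\<close>

lemma mem_CX_iff: "g \<in> CX X \<longleftrightarrow> continuous_on X g"
  unfolding CX_def by simp

definition dual_norm_le :: "'x::topological_space set \<Rightarrow> (('x \<Rightarrow> complex) \<Rightarrow> complex) \<Rightarrow> real \<Rightarrow> bool"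
  where "dual_norm_le X \<psi> K \<longleftrightarrow>
    (\<forall>g d. g \<in> CX X \<longrightarrow> (\<forall>x\<in>X. cmod (g x) \<le> d) \<longrightarrow> cmod (\<psi> g) \<le> K * d)"

lemma dual_norm_leD:
  "dual_norm_le X \<psi> K \<Longrightarrow> g \<in> CX X \<Longrightarrow> (\<And>x. x \<in> X \<Longrightarrow> cmod (g x) \<le> d) \<Longrightarrow> cmod (\<psi> g) \<le> K * d"
  unfolding dual_norm_le_def by blast

context
  fixes X :: "'x::topological_space set" and \<psi> :: "('x \<Rightarrow> complex) \<Rightarrow> complex"
  assumes \<psi>: "\<psi> \<in> CX_dual X"
begin

lemma CX_dual_add: "g \<in> CX X \<Longrightarrow> h \<in> CX X \<Longrightarrow> \<psi> (\<lambda>x. g x + h x) = \<psi> g + \<psi> h"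
  using \<psi> unfolding CX_dual_def by blast

lemma CX_dual_scale: "g \<in> CX X \<Longrightarrow> \<psi> (\<lambda>x. c * g x) = c * \<psi> g"
  using \<psi> unfolding CX_dual_def by blast

lemma CX_dual_zero: "\<psi> (\<lambda>x. 0) = 0"
  using CX_dual_scale[of "\<lambda>x. 0" 0] by (simp add: mem_CX_iff)

lemma CX_dual_sum:
  assumes "finite I" "\<And>i. i \<in> I \<Longrightarrow> h i \<in> CX X"
  shows "\<psi> (\<lambda>x. \<Sum>i\<in>I. c i * h i x) = (\<Sum>i\<in>I. c i * \<psi> (h i))"
  using assms
proof (induction I rule: finite_induct)
  case (insert a F)
  have "(\<lambda>x. c a * h a x) \<in> CX X" "(\<lambda>x. \<Sum>i\<in>F. c i * h i x) \<in> CX X"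
    using insert by (auto simp: mem_CX_iff intro!: continuous_intros)
  then have "\<psi> (\<lambda>x. c a * h a x + (\<Sum>i\<in>F. c i * h i x))
      = \<psi> (\<lambda>x. c a * h a x) + \<psi> (\<lambda>x. \<Sum>i\<in>F. c i * h i x)"
    by (rule CX_dual_add)
  with insert show ?case by (simp add: CX_dual_scale)
qed (simp add: CX_dual_zero)

lemma CX_dual_diff:
  assumes "g \<in> CX X" "h \<in> CX X"
  shows "\<psi> (\<lambda>x. g x - h x) = \<psi> g - \<psi> h"
proof -
  have "(\<lambda>x. (-1) * h x) \<in> CX X" using assms by (auto simp: mem_CX_iff intro!: continuous_intros)
  from CX_dual_add[OF assms(1) this] have "\<psi> (\<lambda>x. g x - h x) = \<psi> g + \<psi> (\<lambda>x. (-1) * h x)"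
    by simp
  also have "\<dots> = \<psi> g - \<psi> h" using CX_dual_scale[OF assms(2), of "-1"] by simp
  finally show ?thesis .
qed

text \<open>For \<open>X = {}\<close> the supremum in the definition of \<open>CX_dual\<close> is an unspecified constant;
  the bound still forces \<open>\<psi> = 0\<close> on \<open>CX X\<close>, because \<open>\<psi>\<close> is homogeneous.\<close>
lemma CX_dual_norm_le: obtains K where "K \<ge> 0" "dual_norm_le X \<psi> K"
proof -
  obtain K where K: "\<And>g. g \<in> CX X \<Longrightarrow> cmod (\<psi> g) \<le> K * (SUP x\<in>X. cmod (g x))"
    using \<psi> unfolding CX_dual_def by blast
  show ?thesis
  proof (cases "X = {}")
    case True
    have "\<psi> g = 0" if g: "g \<in> CX X" for g
    proof (rule ccontr)
      assume nz: "\<psi> g \<noteq> 0"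
      define s where "s = K * (SUP x\<in>X. cmod (g x))"
      define c :: complex where "c = of_real ((\<bar>s\<bar> + 1) / cmod (\<psi> g))"
      have "(\<lambda>x. c * g x) \<in> CX X" using True by (simp add: mem_CX_iff)
      then have "cmod (\<psi> (\<lambda>x. c * g x)) \<le> s" using K True unfolding s_def by simp
      moreover have "cmod (c * \<psi> g) = \<bar>s\<bar> + 1"
        unfolding c_def norm_mult norm_of_real using nz by (simp add: abs_of_nonneg)
      then have "cmod (\<psi> (\<lambda>x. c * g x)) = \<bar>s\<bar> + 1" using CX_dual_scale[OF g, of c] by simp
      ultimately show False by linarith
    qed
    then show ?thesis by (intro that[of 0]) (auto simp: dual_norm_le_def)
  next
    case False
    have "dual_norm_le X \<psi> (max K 0)"
      unfolding dual_norm_le_def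
    proof (intro allI impI)
      fix g d assume g: "g \<in> CX X" and b: "\<forall>x\<in>X. cmod (g x) \<le> d"
      have bdd: "bdd_above ((\<lambda>x. cmod (g x)) ` X)" using b by (intro bdd_aboveI[of _ d]) auto
      have sd: "(SUP x\<in>X. cmod (g x)) \<le> d" using False b by (intro cSUP_least) auto
      obtain x0 where "x0 \<in> X" using False by blast
      have s0: "0 \<le> (SUP x\<in>X. cmod (g x))"
        using cSUP_upper[OF \<open>x0 \<in> X\<close> bdd] norm_ge_zero[of "g x0"] by linarith
      have "cmod (\<psi> g) \<le> K * (SUP x\<in>X. cmod (g x))" using K[OF g] .
      also have "\<dots> \<le> max K 0 * (SUP x\<in>X. cmod (g x))" using s0 by (intro mult_right_mono) auto
      also have "\<dots> \<le> max K 0 * d" using sd by (intro mult_left_mono) auto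
      finally show "cmod (\<psi> g) \<le> max K 0 * d" .
    qed
    then show ?thesis by (intro that[of "max K 0"]) auto
  qed
qed

lemma CX_dual_cong:
  assumes "g \<in> CX X" "h \<in> CX X" "\<And>x. x \<in> X \<Longrightarrow> g x = h x"
  shows "\<psi> g = \<psi> h"
proof -
  obtain K where K: "dual_norm_le X \<psi> K" using CX_dual_norm_le by blast
  have "(\<lambda>x. g x - h x) \<in> CX X" using assms by (auto simp: mem_CX_iff intro!: continuous_intros)
  from dual_norm_leD[OF K this, of 0] have "cmod (\<psi> (\<lambda>x. g x - h x)) \<le> 0"
    using assms(3) by simp
  then show ?thesis using CX_dual_diff[OF assms(1,2)] by simp
qed

lemma CX_dual_split:
  fixes L :: nat
  assumes u: "continuous_on X u" and v: "\<And>k. k < L \<Longrightarrow> continuous_on X (v k)"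
    and v_sum: "\<And>x. x \<in> X \<Longrightarrow> (\<Sum>k<L. v k x) = 1"
  shows "\<psi> (\<lambda>x. complex_of_real (u x)) = (\<Sum>k<L. \<psi> (\<lambda>x. complex_of_real (u x * v k x)))"
proof -
  define w where "w k x = complex_of_real (u x * v k x)" for k x
  have w: "w k \<in> CX X" if "k < L" for k
    using u v[OF that] unfolding mem_CX_iff w_def by (intro continuous_intros)
  have "\<psi> (\<lambda>x. complex_of_real (u x)) = \<psi> (\<lambda>x. \<Sum>k<L. 1 * w k x)"
  proof (rule CX_dual_cong)
    show "(\<lambda>x. complex_of_real (u x)) \<in> CX X" using u unfolding mem_CX_iff by (intro continuous_intros)
    show "(\<lambda>x. \<Sum>k<L. 1 * w k x) \<in> CX X"
      using w unfolding mem_CX_iff by (auto intro!: continuous_intros)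
    show "complex_of_real (u x) = (\<Sum>k<L. 1 * w k x)" if "x \<in> X" for x
      using v_sum[OF that] unfolding w_def by (simp flip: sum_distrib_left of_real_sum)
  qed
  also have "\<dots> = (\<Sum>k<L. 1 * \<psi> (w k))" using w by (intro CX_dual_sum) auto
  finally show ?thesis unfolding w_def by simp
qed

text \<open>Apply \<open>\<psi>\<close> to \<open>\<Sum>\<^sub>i \<theta>\<^sub>i u\<^sub>i\<close>, where \<open>\<theta>\<^sub>i\<close> is the unimodular number rotating \<open>\<psi> u\<^sub>i\<close> onto \<open>\<bar>\<psi> u\<^sub>i\<bar>\<close>.\<close>
lemma CX_dual_variation_le:
  assumes K: "dual_norm_le X \<psi> K" and I: "finite I"
    and u: "\<And>i. i \<in> I \<Longrightarrow> continuous_on X (u i)"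
    and u_nonneg: "\<And>i x. i \<in> I \<Longrightarrow> x \<in> X \<Longrightarrow> 0 \<le> u i x"
    and u_sum: "\<And>x. x \<in> X \<Longrightarrow> (\<Sum>i\<in>I. u i x) \<le> 1"
  shows "(\<Sum>i\<in>I. cmod (\<psi> (\<lambda>x. complex_of_real (u i x)))) \<le> K"
proof -
  let ?U = "\<lambda>i x. complex_of_real (u i x)"
  define \<theta> where "\<theta> i = (if \<psi> (?U i) = 0 then 0 else cnj (\<psi> (?U i)) / cmod (\<psi> (?U i)))" for i
  have \<theta>: "\<theta> i * \<psi> (?U i) = of_real (cmod (\<psi> (?U i)))" for i
    unfolding \<theta>_def by (auto simp: complex_norm_square[symmetric] power2_eq_square field_simps)
  have norm_\<theta>: "cmod (\<theta> i) \<le> 1" for i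
    unfolding \<theta>_def by (auto simp: norm_divide)
  have U: "?U i \<in> CX X" if "i \<in> I" for i using u[OF that] by (auto simp: mem_CX_iff intro!: continuous_intros)
  have "complex_of_real (\<Sum>i\<in>I. cmod (\<psi> (?U i))) = \<psi> (\<lambda>x. \<Sum>i\<in>I. \<theta> i * ?U i x)"
    using CX_dual_sum[OF I U] by (simp add: \<theta>)
  also have "cmod \<dots> \<le> K * 1"
  proof (rule dual_norm_leD[OF K])
    show "(\<lambda>x. \<Sum>i\<in>I. \<theta> i * ?U i x) \<in> CX X"
      using u unfolding mem_CX_iff by (auto intro!: continuous_intros)
    fix x assume x: "x \<in> X"
    have "cmod (\<Sum>i\<in>I. \<theta> i * ?U i x) \<le> (\<Sum>i\<in>I. cmod (\<theta> i) * u i x)"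
      using u_nonneg[OF _ x] by (auto simp: norm_mult intro!: order.trans[OF norm_sum])
    also have "\<dots> \<le> (\<Sum>i\<in>I. u i x)"
      using norm_\<theta> u_nonneg[OF _ x] by (intro sum_mono) (simp add: mult_left_le_one_le)
    finally show "cmod (\<Sum>i\<in>I. \<theta> i * ?U i x) \<le> 1" using u_sum[OF x] by linarith
  qed
  finally have "cmod (complex_of_real (\<Sum>i\<in>I. cmod (\<psi> (?U i)))) \<le> K * 1" .
  moreover have "0 \<le> (\<Sum>i\<in>I. cmod (\<psi> (?U i)))" by (intro sum_nonneg) simp
  ultimately show ?thesis by (simp only: norm_of_real abs_of_nonneg mult_1_right)
qed

end

lemma csubalgebra_0: "csubalgebra S \<Longrightarrow> 0 \<in> S"
  unfolding csubalgebra_def by (metis scaleC_zero_left)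

lemma csubalgebra_of_complex_mult: "csubalgebra S \<Longrightarrow> x \<in> S \<Longrightarrow> of_complex c * x \<in> S"
  unfolding csubalgebra_def by (metis scaleC_eq_of_complex_mult)

lemma csubalgebra_sum: "csubalgebra S \<Longrightarrow> (\<And>i. i \<in> I \<Longrightarrow> g i \<in> S) \<Longrightarrow> (\<Sum>i\<in>I. g i) \<in> S"
  by (induction I rule: infinite_finite_induct) (auto simp: csubalgebra_0, auto simp: csubalgebra_def)

lemma csubalgebra_sum_list:
  "csubalgebra S \<Longrightarrow> (\<And>x. x \<in> set xs \<Longrightarrow> g x \<in> S) \<Longrightarrow> (\<Sum>x\<leftarrow>xs. g x) \<in> S"
  by (induction xs) (auto simp: csubalgebra_0, auto simp: csubalgebra_def)

lemma csubalgebra_prod_list: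
  "csubalgebra S \<Longrightarrow> (\<And>x. x \<in> set xs \<Longrightarrow> g x \<in> S) \<Longrightarrow> (\<Prod>x\<leftarrow>xs. g x) \<in> S"
  by (induction xs) (auto simp: csubalgebra_def)

lemma csubalgebra_closure:
  assumes S: "csubalgebra S"
  shows "csubalgebra (closure S)"
  unfolding csubalgebra_def
proof (intro conjI ballI allI)
  show "1 \<in> closure S" using S closure_subset unfolding csubalgebra_def by blast
next
  fix x y assume "x \<in> closure S" "y \<in> closure S"
  then obtain a b where a: "\<forall>n. a n \<in> S" "a \<longlonglongrightarrow> x" and b: "\<forall>n. b n \<in> S" "b \<longlonglongrightarrow> y"
    unfolding closure_sequential by blast
  have "\<forall>n. a n + b n \<in> S" using a b S unfolding csubalgebra_def by blast
  moreover have "(\<lambda>n. a n + b n) \<longlonglongrightarrow> x + y" using a b by (intro tendsto_intros)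
  ultimately show "x + y \<in> closure S"
    unfolding closure_sequential by (intro exI[of _ "\<lambda>n. a n + b n"]) simp
  have "\<forall>n. a n * b n \<in> S" using a b S unfolding csubalgebra_def by blast
  moreover have "(\<lambda>n. a n * b n) \<longlonglongrightarrow> x * y" using a b by (intro tendsto_intros)
  ultimately show "x * y \<in> closure S"
    unfolding closure_sequential by (intro exI[of _ "\<lambda>n. a n * b n"]) simp
next
  fix c x assume "x \<in> closure S"
  then obtain a where a: "\<forall>n. a n \<in> S" "a \<longlonglongrightarrow> x"
    unfolding closure_sequential by blast
  have "\<forall>n. of_complex c * a n \<in> S" using a S by (simp add: csubalgebra_of_complex_mult)
  moreover have "(\<lambda>n. of_complex c * a n) \<longlonglongrightarrow> of_complex c * x" using a by (intro tendsto_intros)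
  ultimately show "scaleC c x \<in> closure S"
    unfolding closure_sequential scaleC_eq_of_complex_mult
    by (intro exI[of _ "\<lambda>n. of_complex c * a n"]) simp
qed

section \<open>Representations of polynomials of finite type\<close>

type_synonym 'x poly_terms = "(complex \<times> (('x \<Rightarrow> complex) \<Rightarrow> complex) list) list"

definition terms_eval ::
  "(complex \<Rightarrow> 'b::comm_ring_1) \<Rightarrow> ((('x \<Rightarrow> complex) \<Rightarrow> complex) \<Rightarrow> 'b) \<Rightarrow> 'x poly_terms \<Rightarrow> 'b"
  where "terms_eval h v ts = (\<Sum>t\<leftarrow>ts. h (fst t) * (\<Prod>\<psi>\<leftarrow>snd t. v \<psi>))"

definition terms_mult :: "'x poly_terms \<Rightarrow> 'x poly_terms \<Rightarrow> 'x poly_terms" where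
  "terms_mult ts1 ts2 = concat (map (\<lambda>t1. map (\<lambda>t2. (fst t1 * fst t2, snd t1 @ snd t2)) ts2) ts1)"

definition terms_scale :: "complex \<Rightarrow> 'x poly_terms \<Rightarrow> 'x poly_terms" where
  "terms_scale c ts = map (\<lambda>t. (c * fst t, snd t)) ts"

lemma terms_eval_append: "terms_eval h v (ts1 @ ts2) = terms_eval h v ts1 + terms_eval h v ts2"
  unfolding terms_eval_def by simp

lemma terms_eval_mult:
  assumes "\<And>a b. h (a * b) = h a * h b"
  shows "terms_eval h v (terms_mult ts1 ts2) = terms_eval h v ts1 * terms_eval h v ts2"
proof (induction ts1)
  case (Cons t1 ts1)
  have "(\<Sum>t\<leftarrow>map (\<lambda>t2. (fst t1 * fst t2, snd t1 @ snd t2)) ts2. h (fst t) * prod_list (map v (snd t)))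
      = h (fst t1) * prod_list (map v (snd t1)) * terms_eval h v ts2"
    unfolding terms_eval_def by (simp add: o_def assms mult_ac flip: sum_list_const_mult)
  with Cons show ?case by (simp add: terms_mult_def terms_eval_def distrib_right)
qed (simp add: terms_mult_def terms_eval_def)

lemma terms_eval_scale:
  assumes "\<And>a b. h (a * b) = h a * h b"
  shows "terms_eval h v (terms_scale c ts) = h c * terms_eval h v ts"
  unfolding terms_eval_def terms_scale_def
  by (simp add: o_def assms mult.assoc flip: sum_list_const_mult)

lemma character_terms_eval:
  "character \<phi> \<Longrightarrow> \<phi> (terms_eval of_complex v ts) = terms_eval id (\<phi> \<circ> v) ts"
  unfolding terms_eval_def by (simp add: character_sum_list character_prod_list character_simps o_def)

lemma tendsto_terms_eval:
  fixes v :: "(('x \<Rightarrow> complex) \<Rightarrow> complex) \<Rightarrow> nat \<Rightarrow> 'b::{real_normed_algebra_1,comm_ring_1}"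
  assumes "\<And>t \<psi>. t \<in> set ts \<Longrightarrow> \<psi> \<in> set (snd t) \<Longrightarrow> v \<psi> \<longlonglongrightarrow> w \<psi>"
  shows "(\<lambda>n. terms_eval h (\<lambda>\<psi>. v \<psi> n) ts) \<longlonglongrightarrow> terms_eval h w ts"
proof -
  have prod: "(\<lambda>n. \<Prod>\<psi>\<leftarrow>\<psi>s. v \<psi> n) \<longlonglongrightarrow> (\<Prod>\<psi>\<leftarrow>\<psi>s. w \<psi>)" if "\<And>\<psi>. \<psi> \<in> set \<psi>s \<Longrightarrow> v \<psi> \<longlonglongrightarrow> w \<psi>"
    for \<psi>s using that by (induction \<psi>s) (auto intro!: tendsto_mult)
  show ?thesis
    using assms unfolding terms_eval_def by (induction ts) (auto intro!: tendsto_intros prod)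
qed

lemma csubalgebra_terms_eval:
  "csubalgebra S \<Longrightarrow> (\<And>t \<psi>. t \<in> set ts \<Longrightarrow> \<psi> \<in> set (snd t) \<Longrightarrow> v \<psi> \<in> S) \<Longrightarrow> terms_eval of_complex v ts \<in> S"
  unfolding terms_eval_def
  by (auto intro!: csubalgebra_sum_list csubalgebra_of_complex_mult csubalgebra_prod_list)

definition poly_rep :: "'x::topological_space set \<Rightarrow> (('x \<Rightarrow> complex) \<Rightarrow> complex) \<Rightarrow> 'x poly_terms \<Rightarrow> bool"
  where "poly_rep X P ts \<longleftrightarrow> (\<forall>t\<in>set ts. set (snd t) \<subseteq> CX_dual X) \<and>
    (\<forall>g\<in>CX X. P g = terms_eval id (\<lambda>\<psi>. \<psi> g) ts)"

lemma poly_rep_append: "poly_rep X P ts1 \<Longrightarrow> poly_rep X Q ts2 \<Longrightarrow> poly_rep X (\<lambda>g. P g + Q g) (ts1 @ ts2)"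
  unfolding poly_rep_def by (auto simp: terms_eval_append)

lemma poly_rep_mult:
  "poly_rep X P ts1 \<Longrightarrow> poly_rep X Q ts2 \<Longrightarrow> poly_rep X (\<lambda>g. P g * Q g) (terms_mult ts1 ts2)"
  unfolding poly_rep_def by (simp add: terms_eval_mult) (auto simp: terms_mult_def)

lemma poly_rep_scale: "poly_rep X P ts \<Longrightarrow> poly_rep X (\<lambda>g. c * P g) (terms_scale c ts)"
  unfolding poly_rep_def by (simp add: terms_eval_scale) (auto simp: terms_scale_def)

lemma poly_finite_type_iff_poly_rep:
  "P \<in> poly_finite_type X \<longleftrightarrow> (\<exists>ts. poly_rep X P ts) \<and> (\<forall>g. g \<notin> CX X \<longrightarrow> P g = 0)"
proof -
  have "(\<exists>(N::nat) c (m::nat \<Rightarrow> nat) \<psi>. (\<forall>k<N. \<forall>i<m k. \<psi> k i \<in> CX_dual X) \<and>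
          (\<forall>g\<in>CX X. P g = (\<Sum>k<N. c k * (\<Prod>i<m k. \<psi> k i g)))) \<longleftrightarrow> (\<exists>ts. poly_rep X P ts)"
    (is "?sums \<longleftrightarrow> _")
  proof
    assume ?sums
    then obtain N :: nat and c and m :: "nat \<Rightarrow> nat" and \<psi> where "\<forall>k<N. \<forall>i<m k. \<psi> k i \<in> CX_dual X"
      "\<forall>g\<in>CX X. P g = (\<Sum>k<N. c k * (\<Prod>i<m k. \<psi> k i g))"
      by blast
    then have "poly_rep X P (map (\<lambda>k. (c k, map (\<psi> k) [0..<m k])) [0..<N])"
      unfolding poly_rep_def terms_eval_def
      by (auto simp: o_def sum.distinct_set_conv_list[symmetric]
          prod.distinct_set_conv_list[symmetric] atLeast0LessThan)
    then show "\<exists>ts. poly_rep X P ts" by blast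
  next
    assume "\<exists>ts. poly_rep X P ts"
    then obtain ts where ts: "poly_rep X P ts" by blast
    show ?sums
    proof (intro exI conjI)
      show "\<forall>k<length ts. \<forall>i<length (snd (ts ! k)). snd (ts ! k) ! i \<in> CX_dual X"
        using ts unfolding poly_rep_def by (meson nth_mem subsetD)
      show "\<forall>g\<in>CX X. P g = (\<Sum>k<length ts. fst (ts ! k) * (\<Prod>i<length (snd (ts ! k)). (snd (ts ! k) ! i) g))"
        using ts unfolding poly_rep_def terms_eval_def
        by (simp add: sum_list_sum_nth prod.list_conv_set_nth atLeast0LessThan)
    qed
  qed
  then show ?thesis unfolding poly_finite_type_def by blast
qed

definition terms_pexpr :: "'x poly_terms \<Rightarrow> nat \<Rightarrow> (nat \<Rightarrow> 'x \<Rightarrow> real) \<Rightarrow> pexpr" where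
  "terms_pexpr ts M g = psum (map (\<lambda>t. PMul (PConst (fst t))
     (pprod (map (\<lambda>\<psi>. psum (map (\<lambda>j. PMul (PConst (\<psi> (\<lambda>x. complex_of_real (g j x)))) (PVar j)) [0..<M]))
       (snd t)))) ts)"

lemma pvars_less_terms_pexpr: "pvars_less M (terms_pexpr ts M g)"
  unfolding terms_pexpr_def by (auto intro!: pvars_less_psum pvars_less_pprod)

lemma peval_terms_pexpr:
  assumes "h 0 = 0" "h 1 = 1"
  shows "peval h s (terms_pexpr ts M g)
    = terms_eval h (\<lambda>\<psi>. \<Sum>j<M. h (\<psi> (\<lambda>x. complex_of_real (g j x))) * s j) ts"
  unfolding terms_pexpr_def terms_eval_def
  by (simp add: assms peval_psum peval_pprod o_def atLeast0LessThan sum.distinct_set_conv_list[symmetric])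

lemma peval_id_terms_pexpr:
  assumes P: "poly_rep X P ts" and g: "\<And>j. j < M \<Longrightarrow> continuous_on X (g j)"
  shows "peval id t (terms_pexpr ts M g) = P (\<lambda>x. \<Sum>j<M. t j * complex_of_real (g j x))"
proof -
  have G: "(\<lambda>x. complex_of_real (g j x)) \<in> CX X" if "j < M" for j
    using g[OF that] unfolding mem_CX_iff by (intro continuous_intros)
  then have "(\<lambda>x. \<Sum>j<M. t j * complex_of_real (g j x)) \<in> CX X"
    unfolding mem_CX_iff by (auto intro!: continuous_intros)
  with P have "P (\<lambda>x. \<Sum>j<M. t j * complex_of_real (g j x))
      = terms_eval id (\<lambda>\<psi>. \<psi> (\<lambda>x. \<Sum>j<M. t j * complex_of_real (g j x))) ts"
    unfolding poly_rep_def by blast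
  also have "\<dots> = terms_eval id (\<lambda>\<psi>. \<Sum>j<M. \<psi> (\<lambda>x. complex_of_real (g j x)) * t j) ts"
  proof -
    have "\<psi> (\<lambda>x. \<Sum>j<M. t j * complex_of_real (g j x)) = (\<Sum>j<M. \<psi> (\<lambda>x. complex_of_real (g j x)) * t j)"
      if "\<psi> \<in> CX_dual X" for \<psi>
      using CX_dual_sum[OF that, of "{..<M}"] G by (simp add: mult.commute)
    then show ?thesis
      using P unfolding poly_rep_def terms_eval_def
      by (intro arg_cong[where f = sum_list] map_cong refl arg_cong[where f = "(*) _"]
          arg_cong[where f = prod_list]) auto
  qed
  finally show ?thesis by (simp add: peval_terms_pexpr)
qed

text \<open>Both sides are values at \<open>y\<close> of formal polynomials in \<open>M\<close> variables which agree as functions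
  on \<open>\<complex>\<^sup>M\<close>, since there both equal \<open>t \<mapsto> P(\<Sum>\<^sub>j t\<^sub>j g\<^sub>j)\<close>; by the identity theorem they coincide.\<close>
lemma terms_eval_substitution_eq:
  fixes y :: "nat \<Rightarrow> 'a::cbanach_algebra"
  assumes P1: "poly_rep X P ts1" and P2: "poly_rep X P ts2"
    and g: "\<And>j. j < M \<Longrightarrow> continuous_on X (g j)"
  shows "terms_eval of_complex (\<lambda>\<psi>. \<Sum>j<M. of_complex (\<psi> (\<lambda>x. complex_of_real (g j x))) * y j) ts1
       = terms_eval of_complex (\<lambda>\<psi>. \<Sum>j<M. of_complex (\<psi> (\<lambda>x. complex_of_real (g j x))) * y j) ts2"
proof -
  let ?e = "PAdd (terms_pexpr ts1 M g) (PMul (PConst (-1)) (terms_pexpr ts2 M g))"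
  have "peval of_complex y ?e = 0"
  proof (rule peval_hom_eq_0[of of_complex M])
    show "pvars_less M ?e" by (simp add: pvars_less_terms_pexpr)
    show "\<forall>t. peval id t ?e = 0"
      using peval_id_terms_pexpr[OF P1 g] peval_id_terms_pexpr[OF P2 g] by simp
  qed (simp_all add: of_complex_add of_complex_mult)
  then show ?thesis by (simp add: peval_terms_pexpr of_complex_minus)
qed

section \<open>Integrating \<open>f\<close> against functionals in \<open>C(X)\<^sup>*\<close>\<close>

lemma norm_convex_combination_le:
  fixes a :: "nat \<Rightarrow> 'b::real_normed_vector"
  assumes "\<And>j. j < M \<Longrightarrow> 0 \<le> w j" "(\<Sum>j<M. w j) = 1" "\<And>j. j < M \<Longrightarrow> w j \<noteq> 0 \<Longrightarrow> norm (a j) \<le> \<delta>"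
  shows "norm (\<Sum>j<M. w j *\<^sub>R a j) \<le> \<delta>"
proof -
  have "norm (\<Sum>j<M. w j *\<^sub>R a j) \<le> (\<Sum>j<M. w j * norm (a j))"
    using assms(1) by (auto intro!: order.trans[OF norm_sum])
  also have "\<dots> \<le> (\<Sum>j<M. w j * \<delta>)"
    using assms(1,3) by (intro sum_mono) (metis lessThan_iff mult_left_mono mult_zero_left order_refl)
  also have "\<dots> = \<delta>" using assms(2) by (simp add: sum_distrib_right[symmetric])
  finally show ?thesis .
qed

context
  fixes X :: "'x::t2_space set" and f :: "'x \<Rightarrow> 'a::cbanach_algebra"
  assumes compact_X: "compact X" and continuous_f: "continuous_on X f"
begin

text \<open>Against \<open>\<psi> \<in> C(X)\<^sup>*\<close> it gives the Riemann sum
  \<open>\<Sum>\<^sub>j \<psi>(g\<^sub>j) y\<^sub>j\<close> of the \<open>A\<close>-valued integral \<open>\<integral> f d\<psi>\<close>.\<close>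
definition fine_pou :: "real \<Rightarrow> nat \<Rightarrow> (nat \<Rightarrow> 'x \<Rightarrow> real) \<Rightarrow> (nat \<Rightarrow> 'a) \<Rightarrow> bool" where
  "fine_pou \<delta> M g y \<longleftrightarrow> 0 \<le> \<delta> \<and> (\<forall>j<M. continuous_on X (g j)) \<and> (\<forall>j<M. \<forall>x\<in>X. 0 \<le> g j x) \<and>
     (\<forall>x\<in>X. (\<Sum>j<M. g j x) = 1) \<and> (\<forall>j<M. \<forall>x\<in>X. g j x \<noteq> 0 \<longrightarrow> dist (f x) (y j) \<le> \<delta>) \<and>
     (\<forall>j<M. y j \<in> f ` X)"

definition riemann_sum :: "(('x \<Rightarrow> complex) \<Rightarrow> complex) \<Rightarrow> nat \<Rightarrow> (nat \<Rightarrow> 'x \<Rightarrow> real) \<Rightarrow> (nat \<Rightarrow> 'a) \<Rightarrow> 'a"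
  where "riemann_sum \<psi> M g y = (\<Sum>j<M. of_complex (\<psi> (\<lambda>x. complex_of_real (g j x))) * y j)"

lemma fine_pou_exists:
  assumes "\<delta> > 0"
  shows "\<exists>M g y. fine_pou \<delta> M g y"
proof -
  have "compact (f ` X)" by (rule compact_continuous_image[OF continuous_f compact_X])
  then obtain K where K: "K \<subseteq> f ` X" "finite K" "f ` X \<subseteq> (\<Union>k\<in>K. ball k (\<delta>/2))"
    using compactE_image[of "f ` X" "f ` X" "\<lambda>k. ball k (\<delta>/2)"] assms by force
  obtain ys where ys: "set ys = K" using finite_list[OF K(2)] by blast
  define M where "M = length ys"
  define y where "y j = ys ! j" for j
  define u where "u j x = max 0 (\<delta> - dist (f x) (y j))" for j x
  define s where "s x = (\<Sum>j<M. u j x)" for x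
  have u_nonneg: "0 \<le> u j x" for j x unfolding u_def by simp
  have s_pos: "s x > 0" if x: "x \<in> X" for x
  proof -
    obtain k where k: "k \<in> K" "f x \<in> ball k (\<delta>/2)" using K(3) x by blast
    then obtain j where j: "j < M" "y j = k" using ys unfolding M_def y_def by (metis in_set_conv_nth)
    have "dist (f x) (y j) < \<delta>/2" using k j by (simp add: dist_commute)
    then have "u j x > 0" unfolding u_def less_max_iff_disj using zero_le_dist[of "f x" "y j"] by linarith
    moreover have "u j x \<le> s x" unfolding s_def using j u_nonneg by (intro member_le_sum) auto
    ultimately show ?thesis by simp
  qed
  have u_cont: "continuous_on X (u j)" for j unfolding u_def using continuous_f by (intro continuous_intros)
  have "fine_pou \<delta> M (\<lambda>j x. u j x / s x) y"
    unfolding fine_pou_def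
  proof (intro conjI allI impI ballI)
    have "continuous_on X s" unfolding s_def using u_cont by (intro continuous_intros)
    then show "continuous_on X (\<lambda>x. u j x / s x)" for j
      using u_cont s_pos by (intro continuous_intros) (auto dest: s_pos)
    show "(\<Sum>j<M. u j x / s x) = 1" if "x \<in> X" for x
      using s_pos[OF that] by (simp add: sum_divide_distrib[symmetric] s_def[symmetric])
    show "dist (f x) (y j) \<le> \<delta>" if "u j x / s x \<noteq> 0" for j x
      using that unfolding u_def by auto
    show "y j \<in> f ` X" if "j < M" for j using that K(1) ys unfolding y_def M_def by auto
    show "0 \<le> u j x / s x" if "x \<in> X" for j x
      using u_nonneg s_pos[OF that] by (simp add: less_imp_le)
  qed (use assms in auto)
  then show ?thesis by blast
qed

lemma refinement_variation_le:
  assumes \<psi>: "\<psi> \<in> CX_dual X" and K: "dual_norm_le X \<psi> K"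
    and gy: "fine_pou \<delta> M g y" and hz: "fine_pou \<delta>' L h z"
  shows "(\<Sum>p\<in>{..<M} \<times> {..<L}. cmod (\<psi> (\<lambda>x. complex_of_real (g (fst p) x * h (snd p) x)))) \<le> K"
proof (rule CX_dual_variation_le[OF \<psi> K])
  show "continuous_on X (\<lambda>x. g (fst p) x * h (snd p) x)" if "p \<in> {..<M} \<times> {..<L}" for p
    using that gy hz unfolding fine_pou_def by (auto intro!: continuous_intros)
  show "0 \<le> g (fst p) x * h (snd p) x" if "p \<in> {..<M} \<times> {..<L}" "x \<in> X" for p x
    using that gy hz unfolding fine_pou_def by auto
  show "(\<Sum>p\<in>{..<M} \<times> {..<L}. g (fst p) x * h (snd p) x) \<le> 1" if "x \<in> X" for x
  proof -
    have "(\<Sum>p\<in>{..<M} \<times> {..<L}. g (fst p) x * h (snd p) x) = (\<Sum>j<M. g j x) * (\<Sum>k<L. h k x)"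
      unfolding sum_product sum.cartesian_product by (simp add: case_prod_unfold)
    then show ?thesis using that gy hz unfolding fine_pou_def by simp
  qed
qed simp

lemma refinement_term_le:
  assumes \<psi>: "\<psi> \<in> CX_dual X" and gy: "fine_pou \<delta> M g y" and hz: "fine_pou \<delta>' L h z"
    and jk: "j < M" "k < L"
  shows "norm (of_complex (\<psi> (\<lambda>x. complex_of_real (g j x * h k x))) * (y j - z k))
    \<le> cmod (\<psi> (\<lambda>x. complex_of_real (g j x * h k x))) * (\<delta> + \<delta>')"
proof (cases "\<exists>x\<in>X. g j x * h k x \<noteq> 0")
  case True
  then obtain x where x: "x \<in> X" "g j x \<noteq> 0" "h k x \<noteq> 0" by auto
  then have "dist (f x) (y j) \<le> \<delta>" "dist (f x) (z k) \<le> \<delta>'"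
    using gy hz jk unfolding fine_pou_def by auto
  then have "norm (y j - z k) \<le> \<delta> + \<delta>'"
    using dist_triangle[of "y j" "z k" "f x"] by (simp add: dist_norm[symmetric] dist_commute)
  then show ?thesis unfolding norm_of_complex_mult by (intro mult_left_mono) auto
next
  case False
  have "continuous_on X (\<lambda>x. complex_of_real (g j x * h k x))"
    using gy hz jk unfolding fine_pou_def by (auto intro!: continuous_intros)
  with False have "\<psi> (\<lambda>x. complex_of_real (g j x * h k x)) = \<psi> (\<lambda>x. 0)"
    by (intro CX_dual_cong[OF \<psi>]) (auto simp: mem_CX_iff)
  then show ?thesis by (simp add: CX_dual_zero[OF \<psi>])
qed

text \<open>Two fine partitions are compared through their common refinement \<open>g\<^sub>j h\<^sub>k\<close>: on its
  support both tags are close to \<open>f\<close>, and the total mass of \<open>\<psi>\<close> on it is at most \<open>\<parallel>\<psi>\<parallel>\<close>.\<close>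
lemma riemann_sum_dist_le:
  assumes \<psi>: "\<psi> \<in> CX_dual X" and K: "dual_norm_le X \<psi> K"
    and gy: "fine_pou \<delta> M g y" and hz: "fine_pou \<delta>' L h z"
  shows "dist (riemann_sum \<psi> M g y) (riemann_sum \<psi> L h z) \<le> K * (\<delta> + \<delta>')"
proof -
  define I where "I = {..<M} \<times> {..<L}"
  let ?U = "\<lambda>p x. complex_of_real (g (fst p) x * h (snd p) x)"
  have g_cont: "\<And>j. j < M \<Longrightarrow> continuous_on X (g j)" and h_cont: "\<And>k. k < L \<Longrightarrow> continuous_on X (h k)"
    and g_sum: "\<And>x. x \<in> X \<Longrightarrow> (\<Sum>j<M. g j x) = 1" and h_sum: "\<And>x. x \<in> X \<Longrightarrow> (\<Sum>k<L. h k x) = 1"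
    using gy hz unfolding fine_pou_def by auto
  have "riemann_sum \<psi> M g y = (\<Sum>j<M. \<Sum>k<L. of_complex (\<psi> (?U (j, k))) * y j)"
    unfolding riemann_sum_def
    by (simp add: CX_dual_split[OF \<psi> g_cont h_cont h_sum] of_complex_sum sum_distrib_right)
  moreover have "riemann_sum \<psi> L h z = (\<Sum>j<M. \<Sum>k<L. of_complex (\<psi> (?U (j, k))) * z k)"
    unfolding riemann_sum_def
    by (simp add: CX_dual_split[OF \<psi> h_cont g_cont g_sum] mult.commute[of "h _ _"] of_complex_sum
        sum_distrib_right sum.swap[of _ "{..<L}"])
  ultimately have "riemann_sum \<psi> M g y - riemann_sum \<psi> L h z
      = (\<Sum>p\<in>I. of_complex (\<psi> (?U p)) * (y (fst p) - z (snd p)))"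
    unfolding I_def by (simp add: sum.cartesian_product sum_subtractf right_diff_distrib case_prod_unfold)
  also have "norm \<dots> \<le> (\<Sum>p\<in>I. cmod (\<psi> (?U p)) * (\<delta> + \<delta>'))"
    using refinement_term_le[OF \<psi> gy hz] unfolding I_def
    by (intro order.trans[OF norm_sum] sum_mono) auto
  also have "\<dots> = (\<delta> + \<delta>') * (\<Sum>p\<in>I. cmod (\<psi> (?U p)))"
    by (simp add: sum_distrib_left mult.commute)
  also have "\<dots> \<le> (\<delta> + \<delta>') * K"
    using refinement_variation_le[OF \<psi> K gy hz] gy hz unfolding I_def fine_pou_def
    by (intro mult_left_mono) auto
  finally show ?thesis by (simp add: dist_norm mult.commute)
qed

definition pou_seq :: "nat \<Rightarrow> nat \<times> (nat \<Rightarrow> 'x \<Rightarrow> real) \<times> (nat \<Rightarrow> 'a)" where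
  "pou_seq n = (SOME (M, g, y). fine_pou (inverse (real (Suc n))) M g y)"

lemma fine_pou_seq: "pou_seq n = (M, g, y) \<Longrightarrow> fine_pou (inverse (real (Suc n))) M g y"
proof -
  have "\<exists>p. case p of (M, g, y) \<Rightarrow> fine_pou (inverse (real (Suc n))) M g y"
    using fine_pou_exists[of "inverse (real (Suc n))"] by auto
  from someI_ex[OF this] show "pou_seq n = (M, g, y) \<Longrightarrow> fine_pou (inverse (real (Suc n))) M g y"
    unfolding pou_seq_def by simp
qed

definition riemann_seq :: "(('x \<Rightarrow> complex) \<Rightarrow> complex) \<Rightarrow> nat \<Rightarrow> 'a" where
  "riemann_seq \<psi> n = (case pou_seq n of (M, g, y) \<Rightarrow> riemann_sum \<psi> M g y)"

lemma riemann_seq_cases: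
  obtains M g y where "fine_pou (inverse (real (Suc n))) M g y"
    "\<And>\<psi>. riemann_seq \<psi> n = riemann_sum \<psi> M g y"
proof -
  obtain M g y where p: "pou_seq n = (M, g, y)" by (cases "pou_seq n") blast
  show ?thesis using that[OF fine_pou_seq[OF p]] p unfolding riemann_seq_def by simp
qed

lemma tendsto_riemann_seq_compose:
  fixes G :: "'a \<Rightarrow> 'b::metric_space"
  assumes "\<And>\<delta> M g y. fine_pou \<delta> M g y \<Longrightarrow> dist (G (riemann_sum \<psi> M g y)) l \<le> C * \<delta>"
  shows "(\<lambda>n. G (riemann_seq \<psi> n)) \<longlonglongrightarrow> l"
proof -
  have "dist (G (riemann_seq \<psi> n)) l \<le> C * inverse (real (Suc n))" for n
  proof -
    obtain M g y where "fine_pou (inverse (real (Suc n))) M g y"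
      and eq: "riemann_seq \<psi> n = riemann_sum \<psi> M g y"
      using riemann_seq_cases by metis
    from assms[OF this(1)] show ?thesis by (simp only: eq)
  qed
  then have "\<forall>n. norm (dist (G (riemann_seq \<psi> n)) l) \<le> C * inverse (real (Suc n))" by simp
  then have "(\<lambda>n. dist (G (riemann_seq \<psi> n)) l) \<longlonglongrightarrow> 0"
    by (rule Lim_null_comparison[OF always_eventually tendsto_mult_right_zero[OF LIMSEQ_inverse_real_of_nat]])
  then show ?thesis by (rule tendsto_dist_iff[THEN iffD2])
qed

lemma convergent_riemann_seq:
  assumes \<psi>: "\<psi> \<in> CX_dual X"
  shows "convergent (riemann_seq \<psi>)"
proof -
  obtain K where K0: "K \<ge> 0" and K: "dual_norm_le X \<psi> K" using CX_dual_norm_le[OF \<psi>] by blast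
  have dist_le: "dist (riemann_seq \<psi> m) (riemann_seq \<psi> n) \<le> K * (inverse (real (Suc m)) + inverse (real (Suc n)))"
    for m n
    using riemann_sum_dist_le[OF \<psi> K]
    by (cases rule: riemann_seq_cases[of m], cases rule: riemann_seq_cases[of n]) simp
  have "Cauchy (riemann_seq \<psi>)"
  proof (rule metric_CauchyI)
    fix e :: real assume e: "e > 0"
    obtain N :: nat where N: "2 * (K + 1) / e < real N" using reals_Archimedean2 by blast
    have "dist (riemann_seq \<psi> m) (riemann_seq \<psi> n) < e" if "m \<ge> N" "n \<ge> N" for m n
    proof -
      have "dist (riemann_seq \<psi> m) (riemann_seq \<psi> n) \<le> (K + 1) * (inverse (real (Suc N)) + inverse (real (Suc N)))"
        using dist_le[of m n] that K0
        by (elim order.trans, intro mult_mono add_mono) (auto simp: field_simps)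
      also have "\<dots> < e" using N e by (simp add: field_simps)
      finally show ?thesis .
    qed
    then show "\<exists>M. \<forall>m\<ge>M. \<forall>n\<ge>M. dist (riemann_seq \<psi> m) (riemann_seq \<psi> n) < e" by blast
  qed
  then show ?thesis by (simp add: Cauchy_convergent_iff)
qed

definition dual_integral :: "(('x \<Rightarrow> complex) \<Rightarrow> complex) \<Rightarrow> 'a" where
  "dual_integral \<psi> = lim (riemann_seq \<psi>)"

lemma riemann_seq_tendsto: "\<psi> \<in> CX_dual X \<Longrightarrow> riemann_seq \<psi> \<longlonglongrightarrow> dual_integral \<psi>"
  unfolding dual_integral_def using convergent_riemann_seq convergent_LIMSEQ_iff by blast

lemma dual_integral_in_closed_subalgebra:
  assumes \<psi>: "\<psi> \<in> CX_dual X" and B: "csubalgebra B" "closed B" "f ` X \<subseteq> B"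
  shows "dual_integral \<psi> \<in> B"
proof -
  have "riemann_sum \<psi> M g y \<in> B" if "fine_pou \<delta> M g y" for \<delta> M g y
    using that B unfolding riemann_sum_def fine_pou_def
    by (auto intro!: csubalgebra_sum csubalgebra_of_complex_mult)
  then have "riemann_seq \<psi> n \<in> B" for n
    by (cases rule: riemann_seq_cases[of n]) simp
  then show ?thesis using B(2) riemann_seq_tendsto[OF \<psi>] unfolding closed_sequential_limits by blast
qed

lemma character_riemann_sum_dist_le:
  assumes \<psi>: "\<psi> \<in> CX_dual X" and K: "dual_norm_le X \<psi> K" and \<phi>: "character \<phi>"
    and gy: "fine_pou \<delta> M g y"
  shows "dist (\<phi> (riemann_sum \<psi> M g y)) (\<psi> (\<phi> \<circ> f)) \<le> K * \<delta>"
proof -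
  let ?G = "\<lambda>j x. complex_of_real (g j x)"
  have g_nonneg: "\<And>j x. j < M \<Longrightarrow> x \<in> X \<Longrightarrow> 0 \<le> g j x"
    and g_sum: "\<And>x. x \<in> X \<Longrightarrow> (\<Sum>j<M. g j x) = 1"
    and g_fine: "\<And>j x. j < M \<Longrightarrow> x \<in> X \<Longrightarrow> g j x \<noteq> 0 \<Longrightarrow> dist (f x) (y j) \<le> \<delta>"
    and G: "\<And>j. j < M \<Longrightarrow> ?G j \<in> CX X"
    using gy unfolding fine_pou_def mem_CX_iff by (auto intro!: continuous_intros)
  have \<phi>f: "\<phi> \<circ> f \<in> CX X"
    unfolding mem_CX_iff by (rule continuous_on_compose[OF continuous_f continuous_on_character[OF \<phi>]])
  have S: "(\<lambda>x. \<Sum>j<M. \<phi> (y j) * ?G j x) \<in> CX X"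
    using G unfolding mem_CX_iff by (auto intro!: continuous_intros)
  have "\<phi> (riemann_sum \<psi> M g y) = (\<Sum>j<M. \<phi> (y j) * \<psi> (?G j))"
    unfolding riemann_sum_def by (simp add: character_sum[OF \<phi>] character_simps[OF \<phi>] mult.commute)
  also have "\<dots> = \<psi> (\<lambda>x. \<Sum>j<M. \<phi> (y j) * ?G j x)" by (rule sym, rule CX_dual_sum[OF \<psi>]) (auto intro: G)
  finally have "dist (\<phi> (riemann_sum \<psi> M g y)) (\<psi> (\<phi> \<circ> f))
      = cmod (\<psi> (\<lambda>x. (\<Sum>j<M. \<phi> (y j) * ?G j x) - (\<phi> \<circ> f) x))"
    using CX_dual_diff[OF \<psi> S \<phi>f] by (simp add: dist_norm)
  also have "\<dots> \<le> K * \<delta>"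
  proof (rule dual_norm_leD[OF K])
    show "(\<lambda>x. (\<Sum>j<M. \<phi> (y j) * ?G j x) - (\<phi> \<circ> f) x) \<in> CX X"
      using S \<phi>f unfolding mem_CX_iff by (rule continuous_on_diff)
    fix x assume x: "x \<in> X"
    have "(\<Sum>j<M. \<phi> (y j) * ?G j x) - (\<phi> \<circ> f) x = (\<Sum>j<M. g j x *\<^sub>R (\<phi> (y j) - \<phi> (f x)))"
      using g_sum[OF x]
      by (simp add: scaleR_conv_of_real algebra_simps sum_subtractf flip: sum_distrib_left of_real_sum)
    also have "cmod \<dots> \<le> \<delta>"
    proof (rule norm_convex_combination_le)
      fix j assume j: "j < M" "g j x \<noteq> 0"
      have "cmod (\<phi> (y j) - \<phi> (f x)) \<le> norm (y j - f x)"
        using norm_character_le[OF \<phi>, of "y j - f x"] by (simp add: character_diff[OF \<phi>])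
      also have "\<dots> \<le> \<delta>" using g_fine[OF j(1) x j(2)] by (simp add: dist_norm norm_minus_commute)
      finally show "cmod (\<phi> (y j) - \<phi> (f x)) \<le> \<delta>" .
    qed (use g_nonneg x g_sum in auto)
    finally show "cmod ((\<Sum>j<M. \<phi> (y j) * ?G j x) - (\<phi> \<circ> f) x) \<le> \<delta>" .
  qed
  finally show ?thesis .
qed

lemma dual_integral_character:
  assumes \<psi>: "\<psi> \<in> CX_dual X" and \<phi>: "character \<phi>"
  shows "\<phi> (dual_integral \<psi>) = \<psi> (\<phi> \<circ> f)"
proof (rule LIMSEQ_unique)
  show "(\<lambda>n. \<phi> (riemann_seq \<psi> n)) \<longlonglongrightarrow> \<phi> (dual_integral \<psi>)"
    using continuous_on_character[OF \<phi>, of UNIV] riemann_seq_tendsto[OF \<psi>]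
    by (simp add: continuous_on_eq_continuous_at isCont_tendsto_compose)
  obtain K where "dual_norm_le X \<psi> K" using CX_dual_norm_le[OF \<psi>] by blast
  then show "(\<lambda>n. \<phi> (riemann_seq \<psi> n)) \<longlonglongrightarrow> \<psi> (\<phi> \<circ> f)"
    by (intro tendsto_riemann_seq_compose character_riemann_sum_dist_le[OF \<psi> _ \<phi>])
qed

lemma point_eval_in_CX_dual:
  assumes "x \<in> X"
  shows "(\<lambda>g. g x) \<in> CX_dual X"
  unfolding CX_dual_def
proof (intro CollectI conjI ballI allI exI[of _ 1])
  fix g assume "g \<in> CX X"
  then have "compact ((\<lambda>x. cmod (g x)) ` X)"
    using compact_X unfolding mem_CX_iff by (intro compact_continuous_image continuous_intros)
  then have "bdd_above ((\<lambda>x. cmod (g x)) ` X)" by (simp add: bounded_imp_bdd_above compact_imp_bounded)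
  then show "cmod (g x) \<le> 1 * (SUP x\<in>X. cmod (g x))" using cSUP_upper[OF assms] by simp
qed auto

lemma point_eval_riemann_sum_dist_le:
  assumes x: "x \<in> X" and gy: "fine_pou \<delta> M g y"
  shows "dist (riemann_sum (\<lambda>h. h x) M g y) (f x) \<le> \<delta>"
proof -
  have g_sum: "(\<Sum>j<M. g j x) = 1" using gy x unfolding fine_pou_def by auto
  have "riemann_sum (\<lambda>h. h x) M g y - f x = (\<Sum>j<M. g j x *\<^sub>R (y j - f x))"
    using g_sum unfolding riemann_sum_def
    by (simp add: of_complex_of_real_mult scaleR_diff_right sum_subtractf flip: scaleR_sum_left)
  also have "norm \<dots> \<le> \<delta>"
    using gy x g_sum unfolding fine_pou_def
    by (intro norm_convex_combination_le) (auto simp: dist_norm norm_minus_commute)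
  finally show ?thesis by (simp add: dist_norm)
qed

lemma dual_integral_point_eval: "x \<in> X \<Longrightarrow> dual_integral (\<lambda>g. g x) = f x"
  by (rule LIMSEQ_unique[OF riemann_seq_tendsto[OF point_eval_in_CX_dual]
        tendsto_riemann_seq_compose[where G = "\<lambda>a. a" and C = 1]])
    (simp_all add: point_eval_riemann_sum_dist_le)

lemma terms_eval_dual_integral_eq:
  assumes P1: "poly_rep X P ts1" and P2: "poly_rep X P ts2"
  shows "terms_eval of_complex dual_integral ts1 = terms_eval of_complex dual_integral ts2"
proof (rule LIMSEQ_unique)
  have lim: "(\<lambda>n. terms_eval of_complex (\<lambda>\<psi>. riemann_seq \<psi> n) ts) \<longlonglongrightarrow> terms_eval of_complex dual_integral ts"
    if "poly_rep X P ts" for ts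
    using that unfolding poly_rep_def by (intro tendsto_terms_eval riemann_seq_tendsto) auto
  show "(\<lambda>n. terms_eval of_complex (\<lambda>\<psi>. riemann_seq \<psi> n) ts1) \<longlonglongrightarrow> terms_eval of_complex dual_integral ts1"
    by (rule lim[OF P1])
  have "terms_eval of_complex (\<lambda>\<psi>. riemann_seq \<psi> n) ts1 = terms_eval of_complex (\<lambda>\<psi>. riemann_seq \<psi> n) ts2"
    for n
  proof (cases rule: riemann_seq_cases[of n])
    case (1 M g y)
    then show ?thesis
      using terms_eval_substitution_eq[OF P1 P2, of M g y] unfolding fine_pou_def riemann_sum_def by simp
  qed
  with lim[OF P2]
  show "(\<lambda>n. terms_eval of_complex (\<lambda>\<psi>. riemann_seq \<psi> n) ts1) \<longlonglongrightarrow> terms_eval of_complex dual_integral ts2"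
    by simp
qed

definition poly_eval :: "(('x \<Rightarrow> complex) \<Rightarrow> complex) \<Rightarrow> 'a" where
  "poly_eval P = terms_eval of_complex dual_integral (SOME ts. poly_rep X P ts)"

lemma poly_eval_eq: "poly_rep X P ts \<Longrightarrow> poly_eval P = terms_eval of_complex dual_integral ts"
  unfolding poly_eval_def by (rule terms_eval_dual_integral_eq) (auto intro: someI)

lemma character_poly_eval:
  assumes P: "P \<in> poly_finite_type X" and \<phi>: "character \<phi>"
  shows "\<phi> (poly_eval P) = P (\<phi> \<circ> f)"
proof -
  obtain ts where ts: "poly_rep X P ts" using P by (auto simp: poly_finite_type_iff_poly_rep)
  have "\<phi> \<circ> f \<in> CX X"
    unfolding mem_CX_iff by (rule continuous_on_compose[OF continuous_f continuous_on_character[OF \<phi>]])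
  then have "P (\<phi> \<circ> f) = terms_eval id (\<lambda>\<psi>. \<psi> (\<phi> \<circ> f)) ts" using ts unfolding poly_rep_def by blast
  also have "\<dots> = terms_eval id (\<phi> \<circ> dual_integral) ts"
    using ts dual_integral_character[OF _ \<phi>, symmetric] unfolding poly_rep_def terms_eval_def
    by (intro arg_cong[where f = sum_list] map_cong refl arg_cong[where f = "(*) _"]
        arg_cong[where f = prod_list]) auto
  finally show ?thesis by (simp add: poly_eval_eq[OF ts] character_terms_eval[OF \<phi>])
qed

lemma csubalgebra_poly_eval_image: "csubalgebra (poly_eval ` poly_finite_type X)"
  unfolding csubalgebra_def
proof (intro conjI ballI allI)
  let ?one = "\<lambda>g. if g \<in> CX X then 1 else 0"
  have "poly_rep X ?one [(1, [])]" by (simp add: poly_rep_def terms_eval_def)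
  then have "?one \<in> poly_finite_type X" "poly_eval ?one = 1"
    by (auto simp: poly_finite_type_iff_poly_rep poly_eval_eq terms_eval_def)
  then show "1 \<in> poly_eval ` poly_finite_type X" by force
next
  fix a b assume "a \<in> poly_eval ` poly_finite_type X" "b \<in> poly_eval ` poly_finite_type X"
  then obtain P Q where P: "P \<in> poly_finite_type X" "a = poly_eval P"
    and Q: "Q \<in> poly_finite_type X" "b = poly_eval Q"
    by blast
  obtain ts1 ts2 where ts1: "poly_rep X P ts1" and ts2: "poly_rep X Q ts2"
    using P(1) Q(1) by (auto simp: poly_finite_type_iff_poly_rep)
  have "(\<lambda>g. P g + Q g) \<in> poly_finite_type X" "poly_eval (\<lambda>g. P g + Q g) = a + b"
    using P Q poly_rep_append[OF ts1 ts2] poly_eval_eq[OF ts1] poly_eval_eq[OF ts2]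
    by (auto simp: poly_finite_type_iff_poly_rep poly_eval_eq terms_eval_append)
  then show "a + b \<in> poly_eval ` poly_finite_type X" by force
  have "(\<lambda>g. P g * Q g) \<in> poly_finite_type X" "poly_eval (\<lambda>g. P g * Q g) = a * b"
    using P Q poly_rep_mult[OF ts1 ts2] poly_eval_eq[OF ts1] poly_eval_eq[OF ts2]
    by (auto simp: poly_finite_type_iff_poly_rep poly_eval_eq terms_eval_mult of_complex_mult)
  then show "a * b \<in> poly_eval ` poly_finite_type X" by force
next
  fix c a assume "a \<in> poly_eval ` poly_finite_type X"
  then obtain P where P: "P \<in> poly_finite_type X" "a = poly_eval P" by blast
  then obtain ts where ts: "poly_rep X P ts" by (auto simp: poly_finite_type_iff_poly_rep)
  have "(\<lambda>g. c * P g) \<in> poly_finite_type X"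
    using P(1) poly_rep_scale[OF ts] by (auto simp: poly_finite_type_iff_poly_rep)
  moreover have "poly_eval (\<lambda>g. c * P g) = scaleC c a"
    using P(2) by (simp add: poly_eval_eq[OF poly_rep_scale[OF ts]] poly_eval_eq[OF ts]
        terms_eval_scale of_complex_mult scaleC_eq_of_complex_mult)
  ultimately
  show "scaleC c a \<in> poly_eval ` poly_finite_type X" by force
qed

lemma poly_eval_image_subset: "poly_eval ` poly_finite_type X \<subseteq> closed_subalg_gen (f ` X)"
  unfolding closed_subalg_gen_def
proof (intro image_subsetI InterI, clarify)
  fix P B assume "P \<in> poly_finite_type X" and B: "csubalgebra B" "closed B" "f ` X \<subseteq> B"
  then obtain ts where ts: "poly_rep X P ts" by (auto simp: poly_finite_type_iff_poly_rep)
  then show "poly_eval P \<in> B"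
    unfolding poly_eval_eq[OF ts] poly_rep_def
    by (auto intro!: csubalgebra_terms_eval[OF B(1)] dual_integral_in_closed_subalgebra[OF _ B])
qed

lemma closed_subalg_gen_subset_closure:
  "closed_subalg_gen (f ` X) \<subseteq> closure (poly_eval ` poly_finite_type X)"
  unfolding closed_subalg_gen_def
proof (rule Inter_lower, intro CollectI conjI)
  show "csubalgebra (closure (poly_eval ` poly_finite_type X))"
    by (rule csubalgebra_closure[OF csubalgebra_poly_eval_image])
  show "f ` X \<subseteq> closure (poly_eval ` poly_finite_type X)"
  proof (intro image_subsetI)
    fix x assume x: "x \<in> X"
    let ?ev = "\<lambda>g. if g \<in> CX X then g x else 0"
    have "poly_rep X ?ev [(1, [\<lambda>g. g x])]"
      using point_eval_in_CX_dual[OF x] by (simp add: poly_rep_def terms_eval_def)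
    then have "?ev \<in> poly_finite_type X" "poly_eval ?ev = f x"
      by (auto simp: poly_finite_type_iff_poly_rep poly_eval_eq terms_eval_def dual_integral_point_eval[OF x])
    then show "f x \<in> closure (poly_eval ` poly_finite_type X)" using closure_subset by force
  qed
qed simp

end

theorem lemma3p2:
  fixes X :: "'x::t2_space set" and f :: "'x \<Rightarrow> 'a::cbanach_algebra"
  assumes "compact X" and "continuous_on X f"
  shows "\<exists>T :: (('x \<Rightarrow> complex) \<Rightarrow> complex) \<Rightarrow> 'a.
           (\<forall>P\<in>poly_finite_type X. \<forall>\<phi>. character \<phi> \<longrightarrow> \<phi> (T P) = P (\<phi> \<circ> f)) \<and>
           csubalgebra (T ` poly_finite_type X) \<and>
           T ` poly_finite_type X \<subseteq> closed_subalg_gen (f ` X) \<and>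
           closed_subalg_gen (f ` X) \<subseteq> closure (T ` poly_finite_type X)"
  using character_poly_eval[OF assms] csubalgebra_poly_eval_image[OF assms]
    poly_eval_image_subset[OF assms] closed_subalg_gen_subset_closure[OF assms]
  by blast

end
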